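(* Let $c\ge 1$, let $\ell$ be a $c$-approximate pseudo-metric on $\mathcal{Y}$, and let $\mathcal{H}\subseteq\mathcal{Y}^{\mathcal{X}}$ satisfy $\operatorname{diam}(\mathcal{H})<\infty$. Then every scaled Littlestone tree $\mathcal{T}$ realizable by $\mathcal{H}$ has a branch $b$ such that $\sum_{t}\gamma_{b_{\le t}}\le 4c\,\Phi(\mathcal{H})$ (sum over all internal nodes on the branch; over $t=0,\dots,D-1$ if the depth $D$ is finite). Consequently $\mathbb{D}_{\mathrm{onl}}(\mathcal{H})\le 4c\,\Phi(\mathcal{H})$.
   Context: Let $\mathcal{X}$ be a set (instance domain), $\mathcal{Y}$ a set (label space), $\ell:\mathcal{Y}\times\mathcal{Y}\to\mathbb{R}_{\ge0}$ a loss. For $c\ge1$, $\ell$ is a $c$-approximate pseudo-metric if $\ell(y,y)=0$, $\ell(y_1,y_2)=\ell(y_2,y_1)$, and $\ell(y_1,y_2)\le c(\ell(y_1,y_3)+\ell(y_2,y_3))$ for all $y_1,y_2,y_3\in\mathcal{Y}$. For $\mathcal{H}\subseteq\mathcal{Y}^{\mathcal{X}}$ define $d_\ell(f,g)=\sup_{x\in\mathcal{X}}\ell(f(x),g(x))$ and $\operatorname{diam}(\mathcal{H})=\sup_{f,g\in\mathcal{H}}d_\ell(f,g)$. For $U\subseteq\mathcal{H}$ and $\varepsilon>0$, $N(U,\varepsilon)$ is the minimum cardinality of a set $S\subseteq\mathcal{H}$ such that every $u\in U$ has some $s\in S$ with $d_\ell(u,s)\le\varepsilon$ ($+\infty$ if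 no finite such set exists). The entropy potential is $\Phi(U)=\int_0^{\operatorname{diam}(\mathcal{H})}\log_2 N(U,\varepsilon)\,d\varepsilon\in[0,+\infty]$. A scaled Littlestone tree of depth $D\le\infty$ is a complete binary tree whose internal nodes $u\in\{0,1\}^{<D}$ are labeled by $x_u\in\mathcal{X}$ and whose two outgoing edges are labeled $s_{u,0},s_{u,1}\in\mathcal{Y}$; the gap at $u$ is $\gamma_u=\ell(s_{u,0},s_{u,1})$. It is realizable by $\mathcal{H}$ if for every branch $b\in\{0,1\}^D$ and every finite $n\le D$ there is $h\in\mathcal{H}$ with $h(x_{b_{\le t}})=s_{b_{\le t},b_{t+1}}$ for $t=0,\dots,n-1$, where $b_{\le t}$ is the length-$t$ prefix of $b$. The online dimension is $\mathbb{D}_{\mathrm{onl}}(\mathcal{H})=\sup_{\mathcal{T}}\inf_{b}\sum_{t=0}^{D(\mathcal{T})-1}\gamma_{b_{\le t}}$, the sup over scaled Littlestone trees $\mathcal{T}$ realizable by $\mathcal{H}$ (of any depth $D(\mathcal{T})\le\infty$) and the inf over branches $b$ of $\mathcal{T}$. *)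

theory Defs
  imports "HOL-Analysis.Analysis"
begin

definition approx_pseudo_metric :: "real \<Rightarrow> ('y \<Rightarrow> 'y \<Rightarrow> real) \<Rightarrow> bool" where
  "approx_pseudo_metric c l \<longleftrightarrow>
     c \<ge> 1 \<and> (\<forall>y1 y2. l y1 y2 \<ge> 0) \<and> (\<forall>y. l y y = 0) \<and> (\<forall>y1 y2. l y1 y2 = l y2 y1) \<and>
     (\<forall>y1 y2 y3. l y1 y2 \<le> c * (l y1 y3 + l y2 y3))"

definition dist_l :: "('y \<Rightarrow> 'y \<Rightarrow> real) \<Rightarrow> ('x \<Rightarrow> 'y) \<Rightarrow> ('x \<Rightarrow> 'y) \<Rightarrow> ennreal" where
  "dist_l l f g = (SUP x. ennreal (l (f x) (g x)))"

definition diam_l :: "('y \<Rightarrow> 'y \<Rightarrow> real) \<Rightarrow> ('x \<Rightarrow> 'y) set \<Rightarrow> ennreal" where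
  "diam_l l H = (SUP f\<in>H. SUP g\<in>H. dist_l l f g)"

text \<open>Covering number N(U,eps) with centres from H (infinity if no finite cover exists).\<close>
definition cover_num :: "('y \<Rightarrow> 'y \<Rightarrow> real) \<Rightarrow> ('x \<Rightarrow> 'y) set \<Rightarrow> ('x \<Rightarrow> 'y) set \<Rightarrow> real \<Rightarrow> enat" where
  "cover_num l H U eps = Inf {enat (card S) | S. finite S \<and> S \<subseteq> H \<and>
        (\<forall>u\<in>U. \<exists>s\<in>S. dist_l l u s \<le> ennreal eps)}"

definition log2_enat :: "enat \<Rightarrow> ennreal" where
  "log2_enat n = (case n of enat k \<Rightarrow> ennreal (log 2 (real k)) | \<infinity> \<Rightarrow> \<infinity>)"

definition entropy_potential :: "('y \<Rightarrow> 'y \<Rightarrow> real) \<Rightarrow> ('x \<Rightarrow> 'y) set \<Rightarrow> ('x \<Rightarrow> 'y) set \<Rightarrow> ennreal" where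
  "entropy_potential l H U =
     (\<integral>\<^sup>+ eps. log2_enat (cover_num l H U eps) *
         indicator {e. 0 \<le> e \<and> ennreal e \<le> diam_l l H} eps \<partial>lborel)"

text \<open>Scaled Littlestone trees: depth D (an enat, possibly infinite), node labels
  X :: bool list \<Rightarrow> 'x and edge labels S :: bool list \<Rightarrow> bool \<Rightarrow> 'y; internal nodes are
  the lists u with length u < D.  Branches are infinite bool sequences b; only their first
  D entries matter.  The length-t prefix of b is map b [0..<t], and the edge taken at that
  node is b t.\<close>

definition prefix_of :: "(nat \<Rightarrow> bool) \<Rightarrow> nat \<Rightarrow> bool list" where
  "prefix_of b t = map b [0..<t]"

definition realizable ::
  "('x \<Rightarrow> 'y) set \<Rightarrow> enat \<Rightarrow> (bool list \<Rightarrow> 'x) \<Rightarrow> (bool list \<Rightarrow> bool \<Rightarrow> 'y) \<Rightarrow> bool" where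
  "realizable H D X S \<longleftrightarrow>
     (\<forall>b. \<forall>n::nat. enat n \<le> D \<longrightarrow>
        (\<exists>h\<in>H. \<forall>t<n. h (X (prefix_of b t)) = S (prefix_of b t) (b t)))"

definition branch_gain ::
  "('y \<Rightarrow> 'y \<Rightarrow> real) \<Rightarrow> enat \<Rightarrow> (bool list \<Rightarrow> bool \<Rightarrow> 'y) \<Rightarrow> (nat \<Rightarrow> bool) \<Rightarrow> ennreal" where
  "branch_gain l D S b =
     (\<Sum>t. if enat t < D then ennreal (l (S (prefix_of b t) False) (S (prefix_of b t) True)) else 0)"

definition online_dim :: "('y \<Rightarrow> 'y \<Rightarrow> real) \<Rightarrow> ('x \<Rightarrow> 'y) set \<Rightarrow> ennreal" where
  "online_dim l H =
     (SUP T \<in> {(D, X, S). realizable H D X S}.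
        (case T of (D, X, S) \<Rightarrow> (INF b. branch_gain l D S b)))"

end

theory Submission
  imports Defs
begin

text \<open>
  Let a node query x with edge labels y0, y1 at gap \<gamma>, and split the current version space V
  into the hypotheses V0, V1 answering y0 resp. y1. At a scale \<epsilon> < \<gamma>/(2c) no centre can be
  \<epsilon>-close to hypotheses from both sides (approximate triangle inequality at x), so an optimal
  \<epsilon>-cover of V splits into covers of V0 and V1: N(V0,\<epsilon>) + N(V1,\<epsilon>) \<le> N(V,\<epsilon>). By AM-GM,
  log N(V0,\<epsilon>) + log N(V1,\<epsilon>) + 2 \<le> 2 log N(V,\<epsilon>), and integrating over \<epsilon> gives
  \<Phi>(V0) + \<Phi>(V1) + \<gamma>/c \<le> 2 \<Phi>(V). Hence the child of smaller potential has potential at most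
  \<Phi>(V) - \<gamma>/(2c), and always descending into it yields a branch whose gaps sum to at most
  2c \<Phi>(H), half the claimed bound.
\<close>

lemma cover_num_le_card:
  assumes "finite S" "S \<subseteq> H" "\<forall>u\<in>U. \<exists>s\<in>S. dist_l l u s \<le> ennreal e"
  shows "cover_num l H U e \<le> enat (card S)"
  unfolding cover_num_def using assms by (intro Inf_lower) blast

lemma cover_num_enatE:
  assumes "cover_num l H U e = enat k"
  obtains S where "finite S" "S \<subseteq> H" "\<forall>u\<in>U. \<exists>s\<in>S. dist_l l u s \<le> ennreal e" "card S = k"
proof -
  let ?A = "{enat (card S) | S. finite S \<and> S \<subseteq> H \<and> (\<forall>u\<in>U. \<exists>s\<in>S. dist_l l u s \<le> ennreal e)}"
  have "?A \<noteq> {}"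
  proof
    assume "?A = {}"
    then have "Inf ?A = \<infinity>"
      by (simp only: Inf_empty top_enat_def)
    with assms show False
      by (simp add: cover_num_def)
  qed
  then have "Inf ?A \<in> ?A"
    unfolding Inf_enat_def by (auto intro: LeastI)
  then show thesis
    using assms that unfolding cover_num_def by auto
qed

lemma cover_num_mono:
  "U \<subseteq> U' \<Longrightarrow> cover_num l H U e \<le> cover_num l H U' e"
  unfolding cover_num_def by (intro Inf_superset_mono) blast

lemma cover_num_antimono_radius:
  "e \<le> e' \<Longrightarrow> cover_num l H U e' \<le> cover_num l H U e"
  unfolding cover_num_def by (intro Inf_superset_mono) (fastforce intro: order_trans ennreal_leI)

lemma one_le_cover_num:
  assumes "U \<noteq> {}"
  shows "1 \<le> cover_num l H U e"
  unfolding cover_num_def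
proof (rule Inf_greatest)
  fix n assume "n \<in> {enat (card S) | S. finite S \<and> S \<subseteq> H \<and> (\<forall>u\<in>U. \<exists>s\<in>S. dist_l l u s \<le> ennreal e)}"
  then obtain S where "n = enat (card S)" "finite S" "\<forall>u\<in>U. \<exists>s\<in>S. dist_l l u s \<le> ennreal e"
    by blast
  moreover from this(3) have "S \<noteq> {}"
    using assms by blast
  ultimately show "1 \<le> n"
    by (simp add: Suc_leI card_gt_0_iff one_enat_def)
qed

lemma loss_le_dist_l: "ennreal (l (f x) (g x)) \<le> dist_l l f g"
  unfolding dist_l_def by (rule SUP_upper) simp

lemma loss_le_diam_l:
  assumes "f \<in> H" "g \<in> H"
  shows "ennreal (l (f x) (g x)) \<le> diam_l l H"
proof -
  have "ennreal (l (f x) (g x)) \<le> dist_l l f g"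
    by (rule loss_le_dist_l)
  also have "\<dots> \<le> diam_l l H"
    unfolding diam_l_def by (rule SUP_upper2[OF assms(1)]) (rule SUP_upper[OF assms(2)])
  finally show ?thesis .
qed

lemma loss_le_through_center:
  assumes "approx_pseudo_metric c l" "0 \<le> e"
    and "dist_l l f s \<le> ennreal e" "dist_l l g s \<le> ennreal e"
  shows "l (f x) (g x) \<le> 2 * c * e"
proof -
  have "l (f x) (s x) \<le> e" "l (g x) (s x) \<le> e"
    using assms(2-4) loss_le_dist_l[of l f x s] loss_le_dist_l[of l g x s]
    by (auto simp: ennreal_le_iff dest: order_trans)
  moreover have "c \<ge> 0"
    using assms(1) unfolding approx_pseudo_metric_def by auto
  ultimately have "c * (l (f x) (s x) + l (g x) (s x)) \<le> c * (e + e)"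
    by (intro mult_left_mono) auto
  moreover have "l (f x) (g x) \<le> c * (l (f x) (s x) + l (g x) (s x))"
    using assms(1) unfolding approx_pseudo_metric_def by blast
  ultimately show ?thesis
    by simp
qed

lemma cover_num_split:
  assumes "approx_pseudo_metric c l" "0 \<le> e" "2 * c * e < l y0 y1"
    and "U0 \<subseteq> {h\<in>U. h x = y0}" "U1 \<subseteq> {h\<in>U. h x = y1}"
  shows "cover_num l H U0 e + cover_num l H U1 e \<le> cover_num l H U e"
proof (cases "cover_num l H U e")
  case (enat k)
  then obtain S where S: "finite S" "S \<subseteq> H" "\<forall>u\<in>U. \<exists>s\<in>S. dist_l l u s \<le> ennreal e" "card S = k"
    by (rule cover_num_enatE)
  define centers where "centers V = {s\<in>S. \<exists>u\<in>V. dist_l l u s \<le> ennreal e}" for V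
  have restrict: "cover_num l H V e \<le> enat (card (centers V))" if "V \<subseteq> U" for V
  proof (rule cover_num_le_card)
    show "finite (centers V)" "centers V \<subseteq> H"
      using S by (auto simp: centers_def)
    show "\<forall>u\<in>V. \<exists>s\<in>centers V. dist_l l u s \<le> ennreal e"
      using S(3) that unfolding centers_def by blast
  qed
  have "centers U0 \<inter> centers U1 = {}"
  proof (rule equals0I)
    fix s assume "s \<in> centers U0 \<inter> centers U1"
    then obtain u0 u1 where "u0 \<in> U0" "u1 \<in> U1"
      and "dist_l l u0 s \<le> ennreal e" "dist_l l u1 s \<le> ennreal e"
      by (auto simp: centers_def)
    then have "l (u0 x) (u1 x) \<le> 2 * c * e" "u0 x = y0" "u1 x = y1"
      using loss_le_through_center[OF assms(1,2)] assms(4,5) by auto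
    with assms(3) show False
      by simp
  qed
  then have card_centers: "card (centers U0) + card (centers U1) \<le> card S"
    using S(1) by (simp add: card_Un_disjoint[symmetric] card_mono centers_def)
  have "cover_num l H U0 e + cover_num l H U1 e \<le> enat (card (centers U0)) + enat (card (centers U1))"
    using assms(4,5) by (intro add_mono restrict) auto
  also have "\<dots> \<le> cover_num l H U e"
    using card_centers S(4) enat by simp
  finally show ?thesis .
qed simp

lemma log2_am_gm:
  fixes n0 n1 n :: nat
  assumes "1 \<le> n0" "1 \<le> n1" "n0 + n1 \<le> n"
  shows "log 2 n0 + log 2 n1 + 2 \<le> 2 * log 2 n"
proof -
  have "4 * real n0 * real n1 \<le> (real n0 + real n1)\<^sup>2"
    using zero_le_power2[of "real n0 - real n1"] by (simp add: power2_eq_square algebra_simps)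
  also have "\<dots> \<le> (real n)\<^sup>2"
    using assms(3) by (intro power_mono) simp_all
  finally have "log 2 (4 * real n0 * real n1) \<le> log 2 ((real n)\<^sup>2)"
    using assms by simp
  moreover have "log 2 (4 * real n0 * real n1) = 2 + log 2 n0 + log 2 n1"
    using assms log_nat_power[of 2 2 2] by (simp add: log_mult)
  moreover have "log 2 ((real n)\<^sup>2) = 2 * log 2 n"
    using assms by (simp add: log_nat_power)
  ultimately show ?thesis
    by linarith
qed

lemma log2_enat_mono:
  assumes "m \<le> n"
  shows "log2_enat m \<le> log2_enat n"
proof (cases n)
  case (enat k)
  then obtain j where "m = enat j" "j \<le> k"
    using assms by (cases m) auto
  \<comment> \<open>for j = 0 this relies on the junk value log 2 0 = 0\<close>
  then show ?thesis
    using enat by (cases "j = 0") (simp_all add: log2_enat_def log_def ennreal_leI divide_right_mono)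
qed (simp add: log2_enat_def)

lemma log2_enat_am_gm:
  assumes "1 \<le> n0" "1 \<le> n1" "n0 + n1 \<le> n"
  shows "log2_enat n0 + log2_enat n1 + 2 \<le> 2 * log2_enat n"
proof (cases n)
  case (enat k)
  then obtain k0 k1 where k: "n0 = enat k0" "n1 = enat k1" "1 \<le> k0" "1 \<le> k1" "k0 + k1 \<le> k"
    using assms by (cases n0; cases n1) (auto simp: one_enat_def)
  then have "ennreal (log 2 k0 + log 2 k1 + 2) \<le> ennreal (2 * log 2 k)"
    using log2_am_gm by (intro ennreal_leI) blast
  then show ?thesis
    using k enat by (simp add: log2_enat_def ennreal_plus ennreal_mult)
qed (simp add: log2_enat_def ennreal_mult_top)

lemma borel_measurable_antimono:
  fixes f :: "real \<Rightarrow> 'b::{linorder_topology, second_countable_topology}"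
  assumes "antimono f"
  shows "f \<in> borel_measurable borel"
proof (rule borel_measurableI_less)
  fix y
  have "is_interval {x. f x < y}"
    unfolding is_interval_1 using assms by (auto dest: antimonoD intro: le_less_trans)
  then show "{x \<in> space borel. f x < y} \<in> sets borel"
    by (simp add: real_interval_borel_measurable)
qed

definition entropy_integrand ::
  "('y \<Rightarrow> 'y \<Rightarrow> real) \<Rightarrow> ('x \<Rightarrow> 'y) set \<Rightarrow> ('x \<Rightarrow> 'y) set \<Rightarrow> real \<Rightarrow> ennreal" where
  "entropy_integrand l H U e =
     log2_enat (cover_num l H U e) * indicator {e. 0 \<le> e \<and> ennreal e \<le> diam_l l H} e"

lemma entropy_potential_eq_integral:
  "entropy_potential l H U = (\<integral>\<^sup>+ e. entropy_integrand l H U e \<partial>lborel)"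
  unfolding entropy_potential_def entropy_integrand_def ..

lemma borel_measurable_entropy_integrand:
  "entropy_integrand l H U \<in> borel_measurable lborel"
proof -
  have "antimono (\<lambda>e. log2_enat (cover_num l H U e))"
    by (intro antimonoI log2_enat_mono cover_num_antimono_radius)
  then have "(\<lambda>e. log2_enat (cover_num l H U e)) \<in> borel_measurable borel"
    by (rule borel_measurable_antimono)
  moreover have "{e. 0 \<le> e \<and> ennreal e \<le> diam_l l H} \<in> sets borel"
    by measurable
  ultimately show ?thesis
    unfolding entropy_integrand_def by simp
qed

lemma entropy_potential_mono:
  assumes "U \<subseteq> U'"
  shows "entropy_potential l H U \<le> entropy_potential l H U'"
  unfolding entropy_potential_def
  using assms by (intro nn_integral_mono mult_right_mono log2_enat_mono cover_num_mono) auto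

lemma entropy_integrand_split:
  assumes apm: "approx_pseudo_metric c l" and "V \<subseteq> H"
    and V0: "V0 = {h\<in>V. h x = y0}" and V1: "V1 = {h\<in>V. h x = y1}"
    and "V0 \<noteq> {}" "V1 \<noteq> {}"
  shows "entropy_integrand l H V0 e + entropy_integrand l H V1 e
           + 2 * indicator {0..<l y0 y1 / (2 * c)} e
         \<le> 2 * entropy_integrand l H V e"
proof -
  let ?N = "\<lambda>U. cover_num l H U e" and ?d = "l y0 y1 / (2 * c)"
  have "c \<ge> 1" "l y0 y1 \<ge> 0"
    using apm unfolding approx_pseudo_metric_def by auto
  have N0: "1 \<le> ?N V0" "?N V0 \<le> ?N V" and N1: "1 \<le> ?N V1" "?N V1 \<le> ?N V"
    using assms by (auto intro!: one_le_cover_num cover_num_mono)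
  have key: "log2_enat (?N V0) + log2_enat (?N V1) + 2 * indicator {0..<?d} e \<le> 2 * log2_enat (?N V)"
  proof (cases "e \<in> {0..<?d}")
    case True
    then have separated: "2 * c * e < l y0 y1"
      using \<open>c \<ge> 1\<close> by (simp add: field_simps)
    have "?N V0 + ?N V1 \<le> ?N V"
      by (rule cover_num_split[OF apm _ separated]) (use True V0 V1 in auto)
    with True N0(1) N1(1) show ?thesis
      by (simp add: log2_enat_am_gm)
  next
    case False
    have "log2_enat (?N V0) + log2_enat (?N V1) \<le> log2_enat (?N V) + log2_enat (?N V)"
      using N0(2) N1(2) by (intro add_mono log2_enat_mono)
    moreover have "indicator {0..<?d} e = (0::ennreal)"
      using False by simp
    ultimately show ?thesis
      by (simp only: mult_2 mult_zero_right add_0_right)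
  qed
  obtain h0 h1 where "h0 \<in> V0" "h1 \<in> V1"
    using assms by blast
  then have diam: "ennreal (l y0 y1) \<le> diam_l l H"
    using loss_le_diam_l[of h0 H h1 l x] V0 V1 \<open>V \<subseteq> H\<close> by auto
  have "?d \<le> l y0 y1"
    using \<open>c \<ge> 1\<close> \<open>l y0 y1 \<ge> 0\<close> mult_right_mono[of 1 c "l y0 y1"] by (simp add: field_simps)
  have "{0..<?d} \<subseteq> {e. 0 \<le> e \<and> ennreal e \<le> diam_l l H}"
  proof
    fix e assume "e \<in> {0..<?d}"
    then have "ennreal e \<le> ennreal (l y0 y1)"
      using \<open>?d \<le> l y0 y1\<close> by (intro ennreal_leI) simp
    with diam \<open>e \<in> {0..<?d}\<close> show "e \<in> {e. 0 \<le> e \<and> ennreal e \<le> diam_l l H}"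
      by simp
  qed
  then show ?thesis
    using key unfolding entropy_integrand_def by (auto simp: indicator_def)
qed

lemma entropy_potential_split:
  assumes "approx_pseudo_metric c l" "V \<subseteq> H" "V0 = {h\<in>V. h x = y0}" "V1 = {h\<in>V. h x = y1}"
    and "V0 \<noteq> {}" "V1 \<noteq> {}"
  shows "entropy_potential l H V0 + entropy_potential l H V1 + 2 * ennreal (l y0 y1 / (2 * c))
     \<le> 2 * entropy_potential l H V"
proof -
  let ?f = "entropy_integrand l H" and ?d = "l y0 y1 / (2 * c)"
  have "?d \<ge> 0"
    using assms(1) unfolding approx_pseudo_metric_def by auto
  then have "entropy_potential l H V0 + entropy_potential l H V1 + 2 * ennreal ?d
      = (\<integral>\<^sup>+ e. ?f V0 e + ?f V1 e + 2 * indicator {0..<?d} e \<partial>lborel)"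
    using borel_measurable_entropy_integrand[of l H V0] borel_measurable_entropy_integrand[of l H V1]
    by (simp add: entropy_potential_eq_integral nn_integral_add nn_integral_cmult)
  also have "\<dots> \<le> (\<integral>\<^sup>+ e. 2 * ?f V e \<partial>lborel)"
    by (intro nn_integral_mono entropy_integrand_split[OF assms])
  also have "\<dots> = 2 * entropy_potential l H V"
    using borel_measurable_entropy_integrand[of l H V]
    by (simp add: entropy_potential_eq_integral nn_integral_cmult)
  finally show ?thesis .
qed

lemma min_add_le_of_sum_le:
  fixes a b d p :: ennreal
  assumes "a + b + 2 * d \<le> 2 * p"
  shows "min a b + d \<le> p"
proof -
  have "2 * (min a b + d) \<le> a + b + 2 * d"
    by (simp add: distrib_left mult_2 add_mono min.coboundedI1 min.coboundedI2 add.assoc)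
  also note assms
  finally show ?thesis
    by (subst (asm) ennreal_mult_le_mult_iff) auto
qed

definition version_space ::
  "('x \<Rightarrow> 'y) set \<Rightarrow> (bool list \<Rightarrow> 'x) \<Rightarrow> (bool list \<Rightarrow> bool \<Rightarrow> 'y) \<Rightarrow> bool list \<Rightarrow> ('x \<Rightarrow> 'y) set" where
  "version_space H X S u = {h\<in>H. \<forall>t<length u. h (X (take t u)) = S (take t u) (u ! t)}"

lemma version_space_Nil [simp]: "version_space H X S [] = H"
  by (simp add: version_space_def)

lemma version_space_subset: "version_space H X S u \<subseteq> H"
  by (auto simp: version_space_def)

lemma version_space_snoc:
  "version_space H X S (u @ [b]) = {h \<in> version_space H X S u. h (X u) = S u b}"
  by (auto simp: version_space_def nth_append less_Suc_eq)

lemma version_space_nonempty: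
  assumes "realizable H D X S" "enat (length u) \<le> D"
  shows "version_space H X S u \<noteq> {}"
proof -
  have prefix: "prefix_of ((!) u) t = take t u" if "t \<le> length u" for t
    using that by (intro nth_equalityI) (auto simp: prefix_of_def)
  obtain h where "h \<in> H" "\<forall>t<length u. h (X (prefix_of ((!) u) t)) = S (prefix_of ((!) u) t) (u ! t)"
    using assms unfolding realizable_def by blast
  then have "h \<in> version_space H X S u"
    using prefix by (simp add: version_space_def)
  then show ?thesis
    by blast
qed

definition greedy_child ::
  "('y \<Rightarrow> 'y \<Rightarrow> real) \<Rightarrow> ('x \<Rightarrow> 'y) set \<Rightarrow> (bool list \<Rightarrow> 'x) \<Rightarrow> (bool list \<Rightarrow> bool \<Rightarrow> 'y) \<Rightarrow> bool list \<Rightarrow> bool" where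
  "greedy_child l H X S u \<longleftrightarrow>
     entropy_potential l H (version_space H X S (u @ [True]))
       < entropy_potential l H (version_space H X S (u @ [False]))"

lemma greedy_child_step:
  assumes apm: "approx_pseudo_metric c l"
    and "version_space H X S (u @ [False]) \<noteq> {}" "version_space H X S (u @ [True]) \<noteq> {}"
  shows "ennreal (2 * c) * entropy_potential l H (version_space H X S (u @ [greedy_child l H X S u]))
           + ennreal (l (S u False) (S u True))
         \<le> ennreal (2 * c) * entropy_potential l H (version_space H X S u)"
proof -
  let ?P = "\<lambda>u. entropy_potential l H (version_space H X S u)" and ?\<gamma> = "l (S u False) (S u True)"
  have "c \<ge> 1" "?\<gamma> \<ge> 0"
    using apm unfolding approx_pseudo_metric_def by auto
  have "?P (u @ [False]) + ?P (u @ [True]) + 2 * ennreal (?\<gamma> / (2 * c)) \<le> 2 * ?P u"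
    by (rule entropy_potential_split[OF apm version_space_subset version_space_snoc version_space_snoc
          assms(2,3)])
  then have "min (?P (u @ [False])) (?P (u @ [True])) + ennreal (?\<gamma> / (2 * c)) \<le> ?P u"
    by (rule min_add_le_of_sum_le)
  moreover have "?P (u @ [greedy_child l H X S u]) = min (?P (u @ [False])) (?P (u @ [True]))"
    unfolding greedy_child_def by (cases "?P (u @ [True]) < ?P (u @ [False])") (auto simp: min_def)
  ultimately have "ennreal (2 * c) * (?P (u @ [greedy_child l H X S u]) + ennreal (?\<gamma> / (2 * c)))
      \<le> ennreal (2 * c) * ?P u"
    by (intro mult_left_mono) simp_all
  moreover have "ennreal (2 * c) * ennreal (?\<gamma> / (2 * c)) = ennreal ?\<gamma>"
    using \<open>c \<ge> 1\<close> \<open>?\<gamma> \<ge> 0\<close> by (simp add: ennreal_mult[symmetric])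
  ultimately show ?thesis
    by (simp add: distrib_left)
qed

primrec greedy_path :: "(bool list \<Rightarrow> bool) \<Rightarrow> nat \<Rightarrow> bool list" where
  "greedy_path F 0 = []"
| "greedy_path F (Suc n) = greedy_path F n @ [F (greedy_path F n)]"

lemma prefix_of_greedy_path: "prefix_of (\<lambda>n. F (greedy_path F n)) n = greedy_path F n"
  by (induction n) (simp_all add: prefix_of_def)

lemma greedy_branch_gain_le:
  assumes apm: "approx_pseudo_metric c l" and R: "realizable H D X S"
  shows "\<exists>b. branch_gain l D S b \<le> ennreal (2 * c) * entropy_potential l H H"
proof -
  let ?P = "\<lambda>u. entropy_potential l H (version_space H X S u)"
  define F where "F = greedy_child l H X S"
  define b where "b n = F (greedy_path F n)" for n
  have prefix_Suc: "prefix_of b (Suc n) = prefix_of b n @ [F (prefix_of b n)]" for n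
    using prefix_of_greedy_path[of F] by (simp add: b_def[abs_def])
  define gain where
    "gain t = (if enat t < D then ennreal (l (S (prefix_of b t) False) (S (prefix_of b t) True)) else 0)" for t
  have invariant: "(\<Sum>t<n. gain t) + ennreal (2 * c) * ?P (prefix_of b n) \<le> ennreal (2 * c) * ?P []" for n
  proof (induction n)
    case 0
    then show ?case
      by (simp add: prefix_of_def)
  next
    case (Suc n)
    let ?u = "prefix_of b n"
    have "gain n + ennreal (2 * c) * ?P (?u @ [F ?u]) \<le> ennreal (2 * c) * ?P ?u"
    proof (cases "enat n < D")
      case True
      then have nonempty: "version_space H X S (?u @ [bit]) \<noteq> {}" for bit
        by (intro version_space_nonempty[OF R]) (simp add: prefix_of_def Suc_ile_eq)
      with True show ?thesis
        using greedy_child_step[OF apm nonempty nonempty] by (simp add: gain_def F_def add.commute)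
    next
      case False
      have "?P (?u @ [F ?u]) \<le> ?P ?u"
        by (intro entropy_potential_mono) (auto simp: version_space_snoc)
      with False show ?thesis
        by (simp add: gain_def mult_left_mono)
    qed
    then have "(\<Sum>t<Suc n. gain t) + ennreal (2 * c) * ?P (prefix_of b (Suc n))
        \<le> (\<Sum>t<n. gain t) + ennreal (2 * c) * ?P ?u"
      by (simp add: prefix_Suc add.assoc add_left_mono)
    from this Suc.IH show ?case
      by (rule order_trans)
  qed
  have "branch_gain l D S b = (\<Sum>t. gain t)"
    by (simp add: branch_gain_def gain_def)
  also have "\<dots> \<le> ennreal (2 * c) * ?P []"
  proof (rule suminf_le_const[OF summableI])
    show "(\<Sum>t<n. gain t) \<le> ennreal (2 * c) * ?P []" for n
      using invariant[of n] by (rule order_trans[rotated]) simp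
  qed
  finally show ?thesis
    by auto
qed

theorem theorem3p1:
  fixes c :: real and l :: "'y \<Rightarrow> 'y \<Rightarrow> real" and H :: "('x \<Rightarrow> 'y) set"
  assumes "c \<ge> 1"
    and "approx_pseudo_metric c l"
    and "diam_l l H < \<infinity>"
  shows "(\<forall>D X S. realizable H D X S \<longrightarrow>
            (\<exists>b. branch_gain l D S b \<le> ennreal (4 * c) * entropy_potential l H H))
       \<and> online_dim l H \<le> ennreal (4 * c) * entropy_potential l H H"
proof -
  have "ennreal (2 * c) * entropy_potential l H H \<le> ennreal (4 * c) * entropy_potential l H H"
    using assms(1) by (intro mult_right_mono ennreal_leI) auto
  then have tree_bound: "\<exists>b. branch_gain l D S b \<le> ennreal (4 * c) * entropy_potential l H H"
    if "realizable H D X S" for D X S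
    using greedy_branch_gain_le[OF assms(2) that] by (blast intro: order_trans)
  moreover have "online_dim l H \<le> ennreal (4 * c) * entropy_potential l H H"
    unfolding online_dim_def
    by (rule SUP_least) (use tree_bound in \<open>force intro: INF_lower2\<close>)
  ultimately show ?thesis
    by blast
qed

end
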